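(* Let $M\subset\mathbb{R}^{2d}$ satisfy the standing assumptions below, let $V$ be the vector field defined below and $\varphi_t$ its flow. There exist constants $\tilde C,\tilde\delta>0$ such that for all $x$ with $|x|\ge 1/\tilde\delta$, $$|\varphi_1(x)-x-V(x)|\le\frac{\tilde C}{|x|}.$$
   Context: $\mathbb{R}^{2d}$ carries its standard inner product, norm $|\cdot|$, complex structure $J$ ($J^2=-I$, orthogonal) and symplectic form $\omega(u,v)=\langle Ju,v\rangle$. Standing assumptions: $M$ is a smooth closed hypersurface bounding a strictly convex domain containing the origin in its interior, and is a level set of a smooth function with positive definite Hessian. Let $G:M\to S^{2d-1}$ be the outward unit normal Gauss map (a diffeomorphism). For $x\neq0$ set $n_\pm(x)=G^{-1}(\mp Jx/|x|)$ and $V(x)=2(n_+(x)-n_-(x))$, a smooth vector field on $\mathbb{R}^{2d}\setminus\{0\}$, homogeneous of degree zero ($V(cx)=V(x)$ for $c>0$). It equals $-2X_H$, where $X_H=J\nabla H$ and $H$ is the positively $1$-homogeneous function whose unit level set is the symplectic polar of the symmetrization of $M$; in particular its flow $\varphi_t$ is defined for all $t$. *)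

theory Defs
  imports "HOL-Analysis.Analysis"
begin

text \<open>We model R^{2d} as complex^'d (real inner product = real part of the Hermitian
product), with the standard complex structure J = multiplication by i.\<close>

definition cJ :: "complex^'d \<Rightarrow> complex^'d" where
  "cJ x = (\<chi> i. \<i> * x $ i)"

coinductive smooth_fun :: "('a::real_normed_vector \<Rightarrow> real) \<Rightarrow> bool" where
  "(\<forall>x. f differentiable (at x)) \<Longrightarrow>
   (\<forall>v. smooth_fun (\<lambda>x. frechet_derivative f (at x) v)) \<Longrightarrow> smooth_fun f"

definition hess_form :: "('a::real_normed_vector \<Rightarrow> real) \<Rightarrow> 'a \<Rightarrow> 'a \<Rightarrow> real" where
  "hess_form f x v = frechet_derivative (\<lambda>y. frechet_derivative f (at y) v) (at x) v"

definition grad :: "('a::euclidean_space \<Rightarrow> real) \<Rightarrow> 'a \<Rightarrow> 'a" where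
  "grad f x = (\<Sum>b\<in>Basis. frechet_derivative f (at x) b *\<^sub>R b)"

definition gauss_map :: "('a::euclidean_space \<Rightarrow> real) \<Rightarrow> 'a \<Rightarrow> 'a" where
  "gauss_map F p = grad F p /\<^sub>R norm (grad F p)"

definition gauss_inv :: "('a::euclidean_space \<Rightarrow> real) \<Rightarrow> real \<Rightarrow> 'a \<Rightarrow> 'a" where
  "gauss_inv F c u = (THE p. F p = c \<and> gauss_map F p = u)"

definition n_plus :: "(complex^'d \<Rightarrow> real) \<Rightarrow> real \<Rightarrow> complex^'d \<Rightarrow> complex^'d" where
  "n_plus F c x = gauss_inv F c (- (cJ x /\<^sub>R norm x))"

definition n_minus :: "(complex^'d \<Rightarrow> real) \<Rightarrow> real \<Rightarrow> complex^'d \<Rightarrow> complex^'d" where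
  "n_minus F c x = gauss_inv F c (cJ x /\<^sub>R norm x)"

definition Vfield :: "(complex^'d \<Rightarrow> real) \<Rightarrow> real \<Rightarrow> complex^'d \<Rightarrow> complex^'d" where
  "Vfield F c x = 2 *\<^sub>R (n_plus F c x - n_minus F c x)"

end

(*
  Let l > 0 bound the Hessian of F from below near M and g bound |grad F| on M.
  For p, q on M the gradient inequalities of the convex function F and its
  strong convexity give l |p - q|^2 <= g <G(p) - G(q), p - q>, so the inverse
  Gauss map is K-Lipschitz on the sphere with K = g / l, and it is bounded by
  R = max |M|; it is defined everywhere because a maximizer of <u, .> over
  {F <= c} lies on M with normal u.  Since x |-> Jx/|x| moves by at most 2|y - x|/|x|, the field V
  is bounded by 4R and satisfies |V(y) - V(x)| <= 8K |y - x| / |x|.  A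
  trajectory of V therefore stays within 4R of x up to time 1, and comparing
  it with the Euler step x + V(x) costs at most 32 K R / |x|.
*)

theory Submission
  imports Defs
begin

lemma smooth_fun_differentiable: "smooth_fun f \<Longrightarrow> f differentiable (at x)"
  by (erule smooth_fun.cases) auto

lemma smooth_fun_frechet_derivative:
  "smooth_fun f \<Longrightarrow> smooth_fun (\<lambda>x. frechet_derivative f (at x) v)"
  by (erule smooth_fun.cases) auto

lemma smooth_fun_has_derivative:
  "smooth_fun f \<Longrightarrow> (f has_derivative frechet_derivative f (at x)) (at x)"
  using smooth_fun_differentiable frechet_derivative_works by blast

lemma smooth_fun_continuous_on: "smooth_fun f \<Longrightarrow> continuous_on S f"
  by (meson continuous_at_imp_continuous_on differentiable_imp_continuous_within
      smooth_fun_differentiable)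

lemma frechet_derivative_eq_sum_Basis:
  fixes f :: "'a::euclidean_space \<Rightarrow> real"
  assumes "smooth_fun f"
  shows "frechet_derivative f (at x) v = (\<Sum>b\<in>Basis. (v \<bullet> b) * frechet_derivative f (at x) b)"
proof -
  interpret linear "frechet_derivative f (at x)"
    using smooth_fun_has_derivative[OF assms] has_derivative_linear by blast
  have "frechet_derivative f (at x) v = frechet_derivative f (at x) (\<Sum>b\<in>Basis. (v \<bullet> b) *\<^sub>R b)"
    by (simp only: euclidean_representation)
  also have "\<dots> = (\<Sum>b\<in>Basis. (v \<bullet> b) * frechet_derivative f (at x) b)"
    by (simp only: sum scale real_scaleR_def o_def)
  finally show ?thesis .
qed

lemma frechet_derivative_eq_inner_grad:
  fixes f :: "'a::euclidean_space \<Rightarrow> real"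
  assumes "smooth_fun f"
  shows "frechet_derivative f (at x) v = grad f x \<bullet> v"
  unfolding grad_def
  by (subst frechet_derivative_eq_sum_Basis[OF assms])
    (simp add: inner_sum_right inner_commute mult.commute)

lemma continuous_on_grad:
  fixes f :: "'a::euclidean_space \<Rightarrow> real"
  assumes "smooth_fun f"
  shows "continuous_on S (grad f)"
  unfolding grad_def
  by (intro continuous_intros smooth_fun_continuous_on smooth_fun_frechet_derivative assms)

lemma hess_form_eq_sum_Basis:
  fixes f :: "'a::euclidean_space \<Rightarrow> real"
  assumes "smooth_fun f"
  shows "hess_form f x v = (\<Sum>b\<in>Basis. \<Sum>b'\<in>Basis. (v \<bullet> b) * (v \<bullet> b') *
           frechet_derivative (\<lambda>y. frechet_derivative f (at y) b) (at x) b')"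
proof -
  let ?D = "\<lambda>b y. frechet_derivative f (at y) b"
  have expand: "?D v = (\<lambda>y. \<Sum>b\<in>Basis. (v \<bullet> b) * ?D b y)"
    by (rule ext, rule frechet_derivative_eq_sum_Basis[OF assms])
  have "((\<lambda>y. \<Sum>b\<in>Basis. (v \<bullet> b) * ?D b y) has_derivative
      (\<lambda>h. \<Sum>b\<in>Basis. (v \<bullet> b) * frechet_derivative (?D b) (at x) h)) (at x)"
    by (intro has_derivative_sum has_derivative_mult_right smooth_fun_has_derivative
        smooth_fun_frechet_derivative assms)
  then have "hess_form f x v = (\<Sum>b\<in>Basis. (v \<bullet> b) * frechet_derivative (?D b) (at x) v)"
    unfolding hess_form_def expand by (simp add: frechet_derivative_at[symmetric])
  also have "\<dots> = (\<Sum>b\<in>Basis. (v \<bullet> b) * (\<Sum>b'\<in>Basis. (v \<bullet> b') * frechet_derivative (?D b) (at x) b'))"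
    by (subst frechet_derivative_eq_sum_Basis[OF smooth_fun_frechet_derivative[OF assms]]) (rule refl)
  finally show ?thesis
    by (simp add: sum_distrib_left mult.assoc)
qed

lemma hess_form_scaleR:
  fixes f :: "'a::euclidean_space \<Rightarrow> real"
  assumes "smooth_fun f"
  shows "hess_form f x (t *\<^sub>R v) = t\<^sup>2 * hess_form f x v"
  unfolding hess_form_eq_sum_Basis[OF assms]
  by (simp add: sum_distrib_left power2_eq_square mult_ac)

lemma continuous_on_hess_form:
  fixes f :: "'a::euclidean_space \<Rightarrow> real"
  assumes "smooth_fun f"
  shows "continuous_on S (\<lambda>(x, v). hess_form f x v)"
  unfolding hess_form_eq_sum_Basis[OF assms] case_prod_beta
  by (intro continuous_intros continuous_on_compose2[OF smooth_fun_continuous_on continuous_on_fst]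
      smooth_fun_frechet_derivative assms) auto

lemma hess_form_uniformly_positive_on_compact:
  fixes f :: "'a::euclidean_space \<Rightarrow> real"
  assumes smooth: "smooth_fun f"
    and hess_pos: "\<And>x v. v \<noteq> 0 \<Longrightarrow> hess_form f x v > 0"
    and "compact S"
  shows "\<exists>l>0. \<forall>x\<in>S. \<forall>v. l * (norm v)\<^sup>2 \<le> hess_form f x v"
proof (cases "S = {}")
  case True
  then show ?thesis by (intro exI[of _ 1]) auto
next
  case False
  let ?T = "S \<times> sphere (0::'a) 1"
  have "compact ?T" "?T \<noteq> {}"
    using \<open>compact S\<close> False by (auto intro!: compact_Times)
  then obtain z where "z \<in> ?T" and z_min: "\<forall>y\<in>?T. case_prod (hess_form f) z \<le> case_prod (hess_form f) y"
    using continuous_attains_inf[OF _ _ continuous_on_hess_form[OF smooth]] by blast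
  obtain x0 v0 where z: "z = (x0, v0)"
    by (cases z)
  have min: "hess_form f x0 v0 \<le> hess_form f x v" if "(x, v) \<in> ?T" for x v
    using z_min that unfolding z by fastforce
  have "v0 \<noteq> 0"
    using \<open>z \<in> ?T\<close> unfolding z by auto
  have "hess_form f x0 v0 * (norm v)\<^sup>2 \<le> hess_form f x v" if "x \<in> S" for x v
  proof (cases "v = 0")
    case True
    then show ?thesis by (simp add: hess_form_eq_sum_Basis[OF smooth])
  next
    case False
    have "hess_form f x0 v0 \<le> hess_form f x (v /\<^sub>R norm v)"
      using min \<open>x \<in> S\<close> False by auto
    then have "hess_form f x0 v0 * (norm v)\<^sup>2 \<le> hess_form f x (v /\<^sub>R norm v) * (norm v)\<^sup>2"
      by (simp add: mult_right_mono)
    also have "\<dots> = hess_form f x v"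
      using hess_form_scaleR[OF smooth, of x "norm v" "v /\<^sub>R norm v"] False by (simp add: mult.commute)
    finally show ?thesis .
  qed
  moreover have "hess_form f x0 v0 > 0"
    using hess_pos \<open>v0 \<noteq> 0\<close> by blast
  ultimately show ?thesis by blast
qed

lemma has_real_derivative_along_line:
  fixes f :: "'a::euclidean_space \<Rightarrow> real"
  assumes "smooth_fun f"
  shows "((\<lambda>t. f (p + t *\<^sub>R w)) has_real_derivative frechet_derivative f (at (p + t *\<^sub>R w)) w) (at t)"
proof -
  have "((\<lambda>t. p + t *\<^sub>R w) has_derivative (\<lambda>h. h *\<^sub>R w)) (at t)"
    by (auto intro!: derivative_eq_intros)
  from has_derivative_compose[OF this smooth_fun_has_derivative[OF assms]]
  show ?thesis
    unfolding has_field_derivative_def o_def frechet_derivative_eq_inner_grad[OF assms]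
    by (simp add: mult.commute[of _ "grad f _ \<bullet> w"])
qed

lemma has_real_derivative_along_line_hess_form:
  fixes f :: "'a::euclidean_space \<Rightarrow> real"
  assumes "smooth_fun f"
  shows "((\<lambda>t. frechet_derivative f (at (p + t *\<^sub>R w)) w) has_real_derivative
           hess_form f (p + t *\<^sub>R w) w) (at t)"
  unfolding hess_form_def
  by (rule has_real_derivative_along_line[OF smooth_fun_frechet_derivative[OF assms]])

lemma frechet_derivative_along_line_mono:
  fixes f :: "'a::euclidean_space \<Rightarrow> real"
  assumes smooth: "smooth_fun f"
    and hess_pos: "\<And>x v. v \<noteq> 0 \<Longrightarrow> hess_form f x v > 0"
    and "s \<le> t"
  shows "frechet_derivative f (at (p + s *\<^sub>R w)) w \<le> frechet_derivative f (at (p + t *\<^sub>R w)) w"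
proof (cases "w = 0 \<or> s = t")
  case True
  then show ?thesis by (auto simp: frechet_derivative_eq_inner_grad[OF smooth])
next
  case False
  then have "s < t" "w \<noteq> 0" using \<open>s \<le> t\<close> by auto
  from MVT2[OF \<open>s < t\<close> has_real_derivative_along_line_hess_form[OF smooth]]
  obtain z where "frechet_derivative f (at (p + t *\<^sub>R w)) w - frechet_derivative f (at (p + s *\<^sub>R w)) w
      = (t - s) * hess_form f (p + z *\<^sub>R w) w"
    by blast
  moreover have "(t - s) * hess_form f (p + z *\<^sub>R w) w > 0"
    using hess_pos \<open>w \<noteq> 0\<close> \<open>s < t\<close> by simp
  ultimately show ?thesis
    by linarith
qed

lemma frechet_derivative_le_diff:
  fixes f :: "'a::euclidean_space \<Rightarrow> real"
  assumes smooth: "smooth_fun f"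
    and hess_pos: "\<And>x v. v \<noteq> 0 \<Longrightarrow> hess_form f x v > 0"
  shows "frechet_derivative f (at p) (q - p) \<le> f q - f p"
proof -
  from MVT2[of 0 1, OF _ has_real_derivative_along_line[OF smooth, of p "q - p"]]
  obtain z where "0 < z"
    and "f q - f p = frechet_derivative f (at (p + z *\<^sub>R (q - p))) (q - p)"
    by auto
  moreover have "frechet_derivative f (at (p + 0 *\<^sub>R (q - p))) (q - p)
      \<le> frechet_derivative f (at (p + z *\<^sub>R (q - p))) (q - p)"
    using \<open>0 < z\<close> by (intro frechet_derivative_along_line_mono[OF smooth hess_pos]) auto
  ultimately show ?thesis by simp
qed

lemma frechet_derivative_strongly_monotone:
  fixes f :: "'a::euclidean_space \<Rightarrow> real"
  assumes smooth: "smooth_fun f"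
    and "convex S"
    and hess_lower: "\<forall>x\<in>S. \<forall>v. l * (norm v)\<^sup>2 \<le> hess_form f x v"
    and "p \<in> S" "q \<in> S"
  shows "l * (norm (q - p))\<^sup>2 \<le> frechet_derivative f (at q) (q - p) - frechet_derivative f (at p) (q - p)"
proof -
  from MVT2[of 0 1, OF _ has_real_derivative_along_line_hess_form[OF smooth, of p "q - p"]]
  obtain z where z: "0 < z" "z < 1"
    and "frechet_derivative f (at q) (q - p) - frechet_derivative f (at p) (q - p)
      = hess_form f (p + z *\<^sub>R (q - p)) (q - p)"
    by auto
  moreover have "p + z *\<^sub>R (q - p) = (1 - z) *\<^sub>R p + z *\<^sub>R q"
    by (simp add: algebra_simps)
  then have "p + z *\<^sub>R (q - p) \<in> S"
    using \<open>convex S\<close> \<open>p \<in> S\<close> \<open>q \<in> S\<close> z unfolding convex_alt by simp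
  ultimately show ?thesis
    using hess_lower by auto
qed

lemma level_set_dist_le_gauss_map_dist:
  fixes F :: "'a::euclidean_space \<Rightarrow> real"
  assumes smooth: "smooth_fun F"
    and hess_pos: "\<And>x v. v \<noteq> 0 \<Longrightarrow> hess_form F x v > 0"
    and "convex S" and hess_lower: "\<forall>x\<in>S. \<forall>v. l * (norm v)\<^sup>2 \<le> hess_form F x v"
    and "p \<in> S" "q \<in> S" and level: "F p = F q"
    and "grad F p \<noteq> 0" "grad F q \<noteq> 0"
    and grad_le: "norm (grad F p) \<le> G" "norm (grad F q) \<le> G"
  shows "l * norm (p - q) \<le> G * norm (gauss_map F p - gauss_map F q)"
proof -
  define A where "A = grad F q \<bullet> (q - p)"
  define B where "B = grad F p \<bullet> (p - q)"
  have "A \<ge> 0" "B \<ge> 0"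
    using frechet_derivative_le_diff[OF smooth hess_pos, of q p]
      frechet_derivative_le_diff[OF smooth hess_pos, of p q] level
    unfolding A_def B_def frechet_derivative_eq_inner_grad[OF smooth]
    by (simp_all add: inner_diff_right)
  have "l * (norm (q - p))\<^sup>2 \<le> A + B"
    using frechet_derivative_strongly_monotone[OF smooth \<open>convex S\<close> hess_lower \<open>p \<in> S\<close> \<open>q \<in> S\<close>]
    unfolding A_def B_def frechet_derivative_eq_inner_grad[OF smooth]
    by (simp add: inner_diff_right)
  have gp: "norm (grad F p) > 0" and gq: "norm (grad F q) > 0"
    using \<open>grad F p \<noteq> 0\<close> \<open>grad F q \<noteq> 0\<close> by auto
  then have "G > 0"
    using grad_le by linarith
  have "(A + B) / G = B / G + A / G"
    by (simp add: add_divide_distrib)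
  also have "\<dots> \<le> B / norm (grad F p) + A / norm (grad F q)"
    using \<open>A \<ge> 0\<close> \<open>B \<ge> 0\<close> gp gq grad_le by (intro add_mono frac_le) auto
  also have "\<dots> = (gauss_map F p - gauss_map F q) \<bullet> (p - q)"
    unfolding gauss_map_def A_def B_def
    by (simp add: inner_diff_left inner_diff_right algebra_simps divide_inverse)
  also have "\<dots> \<le> norm (gauss_map F p - gauss_map F q) * norm (p - q)"
    by (rule norm_cauchy_schwarz)
  finally have "l * (norm (p - q))\<^sup>2 \<le> G * norm (gauss_map F p - gauss_map F q) * norm (p - q)"
    using \<open>l * (norm (q - p))\<^sup>2 \<le> A + B\<close> \<open>G > 0\<close>
    by (simp add: norm_minus_commute divide_le_eq mult_ac)
  then show ?thesis
    by (cases "p = q") (auto simp: power2_eq_square)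
qed

locale convex_level_set =
  fixes F :: "'a::euclidean_space \<Rightarrow> real" and c :: real
  assumes smooth: "smooth_fun F"
    and hess_pos: "\<And>x v. v \<noteq> 0 \<Longrightarrow> hess_form F x v > 0"
    and level_compact: "compact {x. F x = c}"
    and sublevel_bounded: "bounded {x. F x < c}"
    and origin_inside: "F 0 < c"
begin

lemma grad_nonzero:
  assumes "F p = c"
  shows "grad F p \<noteq> 0"
proof
  assume "grad F p = 0"
  then have "frechet_derivative F (at p) (0 - p) = 0"
    by (simp add: frechet_derivative_eq_inner_grad[OF smooth])
  with frechet_derivative_le_diff[OF smooth hess_pos, of p 0] assms origin_inside
  show False by simp
qed

lemma compact_sublevel: "compact {x. F x \<le> c}"
proof -
  have "{x. F x \<le> c} = {x. F x < c} \<union> {x. F x = c}"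
    by auto
  then have "bounded {x. F x \<le> c}"
    using sublevel_bounded compact_imp_bounded[OF level_compact] by simp
  moreover have "closed {x. F x \<le> c}"
    by (intro closed_Collect_le smooth_fun_continuous_on smooth continuous_on_const)
  ultimately show ?thesis
    by (simp add: compact_eq_bounded_closed)
qed

context
  fixes u p :: 'a
  assumes unit: "norm u = 1"
    and sublevel: "F p \<le> c"
    and maximal: "\<And>y. F y \<le> c \<Longrightarrow> u \<bullet> y \<le> u \<bullet> p"
begin

lemma maximizer_no_ascent:
  assumes "t > 0" "F (p + t *\<^sub>R w) \<le> c"
  shows "u \<bullet> w \<le> 0"
proof -
  have "u \<bullet> (p + t *\<^sub>R w) \<le> u \<bullet> p"
    using maximal assms(2) .
  then have "t * (u \<bullet> w) \<le> 0"
    by (simp add: inner_add_right)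
  with \<open>t > 0\<close> show ?thesis
    by (simp add: mult_le_0_iff)
qed

lemma maximizer_on_level_set: "F p = c"
proof (rule ccontr)
  assume "F p \<noteq> c"
  with sublevel have "F p < c" by simp
  have "isCont (\<lambda>t. F (p + t *\<^sub>R u)) 0"
    by (rule DERIV_isCont[OF has_real_derivative_along_line[OF smooth]])
  then have "((\<lambda>t. F (p + t *\<^sub>R u)) \<longlongrightarrow> F p) (at 0)"
    by (simp add: isCont_def)
  from order_tendstoD(2)[OF this \<open>F p < c\<close>] obtain d where "d > 0"
    and "\<forall>t. t \<noteq> 0 \<and> dist t 0 < d \<longrightarrow> F (p + t *\<^sub>R u) < c"
    unfolding eventually_at by auto
  then have "F (p + (d / 2) *\<^sub>R u) \<le> c"
    by (auto dest!: spec[of _ "d / 2"])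
  with maximizer_no_ascent[of "d / 2" u] \<open>d > 0\<close> have "u \<bullet> u \<le> 0"
    by simp
  with unit show False
    by (simp add: power2_norm_eq_inner[symmetric])
qed

lemma gauss_map_maximizer: "gauss_map F p = u"
proof (rule ccontr)
  assume "gauss_map F p \<noteq> u"
  define e where "e = gauss_map F p"
  have g: "grad F p \<noteq> 0"
    by (rule grad_nonzero[OF maximizer_on_level_set])
  have "e \<bullet> e = 1" "u \<bullet> u = 1"
    using g unit unfolding e_def gauss_map_def by (simp_all add: power2_norm_eq_inner[symmetric])
  moreover have "(u - e) \<bullet> (u - e) > 0"
    using \<open>gauss_map F p \<noteq> u\<close> unfolding e_def by simp
  ultimately have "u \<bullet> e < 1"
    by (simp add: inner_diff_left inner_diff_right inner_commute)
  define w where "w = u - e"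
  have "u \<bullet> w > 0"
    unfolding w_def using \<open>u \<bullet> u = 1\<close> \<open>u \<bullet> e < 1\<close> by (simp add: inner_diff_right)
  have "grad F p \<bullet> w = norm (grad F p) * (e \<bullet> w)"
    unfolding e_def gauss_map_def using g by simp
  moreover have "e \<bullet> w < 0"
    unfolding w_def using \<open>e \<bullet> e = 1\<close> \<open>u \<bullet> e < 1\<close> by (simp add: inner_diff_right inner_commute)
  ultimately have descent: "grad F p \<bullet> w < 0"
    using g by (simp add: mult_pos_neg)
  have "((\<lambda>t. F (p + t *\<^sub>R w)) has_real_derivative grad F p \<bullet> w) (at 0)"
    using has_real_derivative_along_line[OF smooth, of p w 0]
    by (simp add: frechet_derivative_eq_inner_grad[OF smooth])
  from DERIV_neg_dec_right[OF this descent] obtain d where "d > 0"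
    and "\<forall>h>0. h < d \<longrightarrow> F (p + (0 + h) *\<^sub>R w) < F (p + 0 *\<^sub>R w)"
    by blast
  then have "F (p + (d / 2) *\<^sub>R w) \<le> c"
    using maximizer_on_level_set by (auto dest!: spec[of _ "d / 2"])
  with maximizer_no_ascent[of "d / 2" w] \<open>d > 0\<close> have "u \<bullet> w \<le> 0"
    by simp
  with \<open>u \<bullet> w > 0\<close> show False
    by simp
qed

end

lemma gauss_map_surj:
  assumes "norm u = 1"
  shows "\<exists>p. F p = c \<and> gauss_map F p = u"
proof -
  have "{x. F x \<le> c} \<noteq> {}"
    using origin_inside less_imp_le by blast
  then obtain p where "F p \<le> c" and max: "\<forall>y\<in>{x. F x \<le> c}. u \<bullet> y \<le> u \<bullet> p"
    using continuous_attains_sup[OF compact_sublevel _ continuous_on_inner[OF continuous_on_const continuous_on_id]]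
    by auto
  have "\<And>y. F y \<le> c \<Longrightarrow> u \<bullet> y \<le> u \<bullet> p"
    using max by simp
  with assms \<open>F p \<le> c\<close> show ?thesis
    using maximizer_on_level_set gauss_map_maximizer by blast
qed

lemma level_set_lipschitz_in_gauss_map:
  "\<exists>K>0. \<forall>p q. F p = c \<longrightarrow> F q = c \<longrightarrow>
     norm (p - q) \<le> K * norm (gauss_map F p - gauss_map F q)"
proof -
  let ?M = "{x. F x = c}"
  obtain R where R: "\<forall>x\<in>?M. norm x \<le> R"
    using compact_imp_bounded[OF level_compact] unfolding bounded_iff by blast
  have "bounded (grad F ` ?M)"
    by (intro compact_imp_bounded compact_continuous_image continuous_on_grad smooth level_compact)
  then obtain G where "G > 0" and G: "\<forall>x\<in>?M. norm (grad F x) \<le> G"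
    unfolding bounded_pos by auto
  obtain l where "l > 0" and l: "\<forall>x\<in>cball 0 R. \<forall>v. l * (norm v)\<^sup>2 \<le> hess_form F x v"
    using hess_form_uniformly_positive_on_compact[OF smooth hess_pos compact_cball] by blast
  have "norm (p - q) \<le> G / l * norm (gauss_map F p - gauss_map F q)" if "F p = c" "F q = c" for p q
  proof -
    have "l * norm (p - q) \<le> G * norm (gauss_map F p - gauss_map F q)"
      by (rule level_set_dist_le_gauss_map_dist[OF smooth hess_pos convex_cball l])
        (simp_all add: that R G grad_nonzero)
    with \<open>l > 0\<close> show ?thesis
      by (simp add: field_simps mult.commute)
  qed
  with \<open>G > 0\<close> \<open>l > 0\<close> show ?thesis
    by (intro exI[of _ "G / l"]) auto
qed

lemma gauss_inv_on_level_set: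
  assumes "norm u = 1"
  shows "F (gauss_inv F c u) = c" and "gauss_map F (gauss_inv F c u) = u"
proof -
  obtain K where K: "\<forall>p q. F p = c \<longrightarrow> F q = c \<longrightarrow>
      norm (p - q) \<le> K * norm (gauss_map F p - gauss_map F q)"
    using level_set_lipschitz_in_gauss_map by blast
  obtain p where p: "F p = c" "gauss_map F p = u"
    using gauss_map_surj[OF assms] by blast
  have "q = p" if "F q = c" "gauss_map F q = u" for q
    using K that p by (metis diff_self norm_zero mult_zero_right norm_le_zero_iff right_minus_eq)
  with p have "\<exists>!p. F p = c \<and> gauss_map F p = u"
    by blast
  then have "F (gauss_inv F c u) = c \<and> gauss_map F (gauss_inv F c u) = u"
    unfolding gauss_inv_def by (rule theI')
  then show "F (gauss_inv F c u) = c" and "gauss_map F (gauss_inv F c u) = u"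
    by simp_all
qed

lemma gauss_inv_lipschitz:
  "\<exists>K>0. \<forall>u v. norm u = 1 \<longrightarrow> norm v = 1 \<longrightarrow>
     norm (gauss_inv F c u - gauss_inv F c v) \<le> K * norm (u - v)"
proof -
  obtain K where "K > 0" and K: "\<forall>p q. F p = c \<longrightarrow> F q = c \<longrightarrow>
      norm (p - q) \<le> K * norm (gauss_map F p - gauss_map F q)"
    using level_set_lipschitz_in_gauss_map by blast
  have "norm (gauss_inv F c u - gauss_inv F c v) \<le> K * norm (u - v)"
    if "norm u = 1" "norm v = 1" for u v
    using K[rule_format, of "gauss_inv F c u" "gauss_inv F c v"]
      gauss_inv_on_level_set[OF that(1)] gauss_inv_on_level_set[OF that(2)] by simp
  with \<open>K > 0\<close> show ?thesis
    by blast
qed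

lemma gauss_inv_bounded: "\<exists>R>0. \<forall>u. norm u = 1 \<longrightarrow> norm (gauss_inv F c u) \<le> R"
  using compact_imp_bounded[OF level_compact] gauss_inv_on_level_set(1)
  unfolding bounded_pos by blast

end

lemma euler_step_error:
  fixes \<gamma> :: "real \<Rightarrow> 'a::real_normed_vector" and V :: "'a \<Rightarrow> 'a"
  assumes deriv: "\<And>t. t \<in> {0..1} \<Longrightarrow> (\<gamma> has_vector_derivative V (\<gamma> t)) (at t within {0..1})"
    and bounded: "\<And>t. t \<in> {0..1} \<Longrightarrow> norm (V (\<gamma> t)) \<le> B"
    and lipschitz: "\<And>t. t \<in> {0..1} \<Longrightarrow> norm (V (\<gamma> t) - V (\<gamma> 0)) \<le> L * norm (\<gamma> t - \<gamma> 0)"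
    and "L \<ge> 0"
  shows "norm (\<gamma> 1 - \<gamma> 0 - V (\<gamma> 0)) \<le> L * B"
proof -
  have near: "norm (\<gamma> t - \<gamma> 0) \<le> B" if "t \<in> {0..1}" for t
  proof -
    have "norm (\<gamma> t - \<gamma> 0) \<le> B * norm (t - 0)"
    proof (rule differentiable_bound[of "{0..1}" \<gamma> "\<lambda>s h. h *\<^sub>R V (\<gamma> s)"])
      fix s :: real
      assume "s \<in> {0..1}"
      then show "(\<gamma> has_derivative (\<lambda>h. h *\<^sub>R V (\<gamma> s))) (at s within {0..1})"
        using deriv by (simp add: has_vector_derivative_def)
      show "onorm (\<lambda>h. h *\<^sub>R V (\<gamma> s)) \<le> B"
        using bounded \<open>s \<in> {0..1}\<close> by (simp add: onorm_scaleR_left onorm_id)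
    qed (use that in auto)
    moreover have "B * norm (t - 0) \<le> B"
      using that order_trans[OF norm_ge_zero bounded[OF that]] by (simp add: mult_right_le_one_le)
    ultimately show ?thesis
      by linarith
  qed
  have "norm (\<gamma> 1 - \<gamma> 0 - (1 - 0) *\<^sub>R V (\<gamma> 0)) \<le> norm (1 - 0 :: real) * (L * B)"
  proof (rule vector_differentiable_bound_linearization[OF deriv])
    fix t :: real
    assume "t \<in> {0..1}"
    then show "norm (V (\<gamma> t) - V (\<gamma> 0)) \<le> L * B"
      using lipschitz near \<open>L \<ge> 0\<close> by (meson mult_left_mono order_trans)
  qed (auto simp: closed_segment_eq_real_ivl)
  then show ?thesis
    by simp
qed

lemma norm_cJ [simp]: "norm (cJ x) = norm x"
  unfolding cJ_def norm_vec_def by (simp add: norm_mult)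

lemma cJ_diff: "cJ (x - y) = cJ x - cJ y"
  unfolding cJ_def by (simp add: vec_eq_iff algebra_simps)

lemma cJ_scaleR: "cJ (r *\<^sub>R x) = r *\<^sub>R cJ x"
  unfolding cJ_def by (simp add: vec_eq_iff scaleR_conv_of_real)

lemma norm_normalize_diff_le:
  fixes x y :: "'a::real_normed_vector"
  assumes "x \<noteq> 0" "y \<noteq> 0"
  shows "norm (y /\<^sub>R norm y - x /\<^sub>R norm x) \<le> 2 * norm (y - x) / norm x"
proof -
  have split: "y /\<^sub>R norm y - x /\<^sub>R norm x
      = (y - x) /\<^sub>R norm x + (inverse (norm y) - inverse (norm x)) *\<^sub>R y"
    by (simp add: algebra_simps)
  have "norm ((inverse (norm y) - inverse (norm x)) *\<^sub>R y) = \<bar>norm x - norm y\<bar> / norm x"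
    using assms by (simp add: field_simps abs_minus_commute)
  also have "\<dots> \<le> norm (y - x) / norm x"
    by (intro divide_right_mono) (auto simp: norm_triangle_ineq3 norm_minus_commute)
  moreover have "norm ((y - x) /\<^sub>R norm x) = norm (y - x) / norm x"
    by (simp add: divide_inverse mult.commute)
  ultimately show ?thesis
    unfolding split
    using norm_triangle_ineq[of "(y - x) /\<^sub>R norm x" "(inverse (norm y) - inverse (norm x)) *\<^sub>R y"]
    by linarith
qed

lemma norm_Vfield_le:
  assumes "\<And>u. norm u = 1 \<Longrightarrow> norm (gauss_inv F c u) \<le> R" and "x \<noteq> 0"
  shows "norm (Vfield F c x) \<le> 4 * R"
proof -
  have "norm (Vfield F c x) \<le> 2 * (norm (n_plus F c x) + norm (n_minus F c x))"
    unfolding Vfield_def using norm_triangle_ineq4[of "n_plus F c x" "n_minus F c x"] by simp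
  also have "\<dots> \<le> 2 * (R + R)"
    unfolding n_plus_def n_minus_def using assms by (intro mult_left_mono add_mono) auto
  finally show ?thesis
    by simp
qed

lemma norm_Vfield_diff_le:
  assumes lipschitz: "\<And>u v. norm u = 1 \<Longrightarrow> norm v = 1 \<Longrightarrow>
      norm (gauss_inv F c u - gauss_inv F c v) \<le> K * norm (u - v)"
    and "K \<ge> 0" "x \<noteq> 0" "y \<noteq> 0"
  shows "norm (Vfield F c y - Vfield F c x) \<le> 8 * K * norm (y - x) / norm x"
proof -
  let ?gi = "gauss_inv F c" and ?ux = "cJ x /\<^sub>R norm x" and ?uy = "cJ y /\<^sub>R norm y"
  have unit: "norm ?ux = 1" "norm ?uy = 1" "norm (- ?ux) = 1" "norm (- ?uy) = 1"
    using \<open>x \<noteq> 0\<close> \<open>y \<noteq> 0\<close> by simp_all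
  have "norm (?uy - ?ux) = norm (y /\<^sub>R norm y - x /\<^sub>R norm x)"
    by (simp add: cJ_scaleR[symmetric] cJ_diff[symmetric])
  also have "\<dots> \<le> 2 * norm (y - x) / norm x"
    by (rule norm_normalize_diff_le[OF \<open>x \<noteq> 0\<close> \<open>y \<noteq> 0\<close>])
  finally have normalize: "norm (?uy - ?ux) \<le> 2 * norm (y - x) / norm x" .
  have "Vfield F c y - Vfield F c x = 2 *\<^sub>R ((?gi (- ?uy) - ?gi (- ?ux)) - (?gi ?uy - ?gi ?ux))"
    unfolding Vfield_def n_plus_def n_minus_def by (simp add: algebra_simps)
  then have "norm (Vfield F c y - Vfield F c x)
      \<le> 2 * (norm (?gi (- ?uy) - ?gi (- ?ux)) + norm (?gi ?uy - ?gi ?ux))"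
    using norm_triangle_ineq4[of "?gi (- ?uy) - ?gi (- ?ux)" "?gi ?uy - ?gi ?ux"] by simp
  also have "\<dots> \<le> 2 * (K * norm (?uy - ?ux) + K * norm (?uy - ?ux))"
    using lipschitz[OF unit(4,3)] lipschitz[OF unit(2,1)]
    by (simp add: norm_minus_commute[of ?ux ?uy])
  also have "\<dots> = 4 * K * norm (?uy - ?ux)"
    by simp
  also have "\<dots> \<le> 4 * K * (2 * norm (y - x) / norm x)"
    using normalize \<open>K \<ge> 0\<close> by (intro mult_left_mono) auto
  finally show ?thesis
    by simp
qed

lemma Vfield_trajectory_error:
  assumes R: "\<And>u. norm u = 1 \<Longrightarrow> norm (gauss_inv F c u) \<le> R"
    and K: "\<And>u v. norm u = 1 \<Longrightarrow> norm v = 1 \<Longrightarrow>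
      norm (gauss_inv F c u - gauss_inv F c v) \<le> K * norm (u - v)"
    and "K \<ge> 0" and nonzero: "\<And>t. \<gamma> t \<noteq> 0"
    and deriv: "\<And>t. (\<gamma> has_vector_derivative Vfield F c (\<gamma> t)) (at t)"
  shows "norm (\<gamma> 1 - \<gamma> 0 - Vfield F c (\<gamma> 0)) \<le> 32 * K * R / norm (\<gamma> 0)"
proof -
  have "norm (\<gamma> 1 - \<gamma> 0 - Vfield F c (\<gamma> 0)) \<le> 8 * K / norm (\<gamma> 0) * (4 * R)"
  proof (rule euler_step_error)
    fix t :: real
    show "(\<gamma> has_vector_derivative Vfield F c (\<gamma> t)) (at t within {0..1})"
      using deriv has_vector_derivative_at_within by blast
    show "norm (Vfield F c (\<gamma> t)) \<le> 4 * R"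
      using norm_Vfield_le[OF R nonzero] .
    have "norm (Vfield F c (\<gamma> t) - Vfield F c (\<gamma> 0)) \<le> 8 * K * norm (\<gamma> t - \<gamma> 0) / norm (\<gamma> 0)"
      using \<open>K \<ge> 0\<close> nonzero by (intro norm_Vfield_diff_le[OF K]) auto
    then show "norm (Vfield F c (\<gamma> t) - Vfield F c (\<gamma> 0)) \<le> 8 * K / norm (\<gamma> 0) * norm (\<gamma> t - \<gamma> 0)"
      by simp
  qed (use \<open>K \<ge> 0\<close> in simp)
  then show ?thesis
    by simp
qed

theorem lemma3p3:
  fixes F :: "complex^'d \<Rightarrow> real" and c :: real
    and \<phi> :: "real \<Rightarrow> complex^'d \<Rightarrow> complex^'d"
  assumes smooth: "smooth_fun F"
    and hess_pos: "\<And>x v. v \<noteq> 0 \<Longrightarrow> hess_form F x v > 0"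
    and M_compact: "compact {x. F x = c}"
    and dom_bounded: "bounded {x. F x < c}"
    and origin_inside: "F 0 < c"
    and flow: "\<And>x. x \<noteq> 0 \<Longrightarrow> \<phi> 0 x = x \<and>
        (\<forall>t. \<phi> t x \<noteq> 0 \<and>
             ((\<lambda>s. \<phi> s x) has_vector_derivative Vfield F c (\<phi> t x)) (at t))"
  shows "\<exists>C \<delta>. C > 0 \<and> \<delta> > 0 \<and>
           (\<forall>x. norm x \<ge> 1 / \<delta> \<longrightarrow>
                norm (\<phi> 1 x - x - Vfield F c x) \<le> C / norm x)"
proof -
  interpret convex_level_set F c
    using assms by unfold_locales auto
  obtain R where "R > 0" and R: "\<And>u. norm u = 1 \<Longrightarrow> norm (gauss_inv F c u) \<le> R"
    using gauss_inv_bounded by blast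
  obtain K where "K > 0" and K: "\<And>u v. norm u = 1 \<Longrightarrow> norm v = 1 \<Longrightarrow>
      norm (gauss_inv F c u - gauss_inv F c v) \<le> K * norm (u - v)"
    using gauss_inv_lipschitz by blast
  have "norm (\<phi> 1 x - x - Vfield F c x) \<le> 32 * K * R / norm x" if "norm x \<ge> 1" for x
  proof -
    have "x \<noteq> 0"
      using that by auto
    from flow[OF this] have start: "\<phi> 0 x = x" and nonzero: "\<And>t. \<phi> t x \<noteq> 0"
      and deriv: "\<And>t. ((\<lambda>s. \<phi> s x) has_vector_derivative Vfield F c (\<phi> t x)) (at t)"
      by auto
    have "norm (\<phi> 1 x - \<phi> 0 x - Vfield F c (\<phi> 0 x)) \<le> 32 * K * R / norm (\<phi> 0 x)"
      using \<open>K > 0\<close> nonzero deriv by (intro Vfield_trajectory_error[OF R K]) auto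
    with start show ?thesis
      by simp
  qed
  with \<open>R > 0\<close> \<open>K > 0\<close> show ?thesis
    by (intro exI[of _ "32 * K * R"] exI[of _ 1]) simp
qed

end
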